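(* Let $0<\gamma<1$, $p\ge2$ an integer, and $$\beta_{\gamma,p}:=\min\left\{\frac{1-\gamma}{2p}\log\Bigl(\frac{2p}{p+1}\Bigr),\ \frac{1-\gamma}{8\,p^\gamma(p-1)^{1-\gamma}}\right\}.$$ Then for every $j\ge p$, $$(c_\gamma^{(p)})_j\le (c_\gamma)_p\,(1-\beta_{\gamma,p})^{j-p},$$ and moreover $\frac{1-\gamma}{8p}\le\beta_{\gamma,p}\le\frac{1-\gamma}{4p}$.
   Context: $\log$ is the natural logarithm. $(c_\gamma)_j$ is defined by $(1-x)^{-\gamma}=\sum_{j\ge0}(c_\gamma)_jx^j$; $(\tilde c_\gamma)_k$ by $(1-x)^{\gamma}=\sum_{k\ge0}(\tilde c_\gamma)_kx^k$ ($|x|<1$). The sequence $(c_\gamma^{(p)})_j$ is defined by $(c_\gamma^{(p)})_0=1$ and $(c_\gamma^{(p)})_j=-\sum_{k=1}^{\min\{p-1,j\}}(\tilde c_\gamma)_k(c_\gamma^{(p)})_{j-k}$ for $j\ge1$; its first $n$ terms are the subdiagonal entries of the lower-triangular Toeplitz matrix $C_\gamma^{(p)}$, the inverse of the $n\times n$ lower-triangular Toeplitz matrix with $r$-th subdiagonal $(\tilde c_\gamma)_r$ for $r\le p-1$ and $0$ otherwise. *)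

theory Defs
  imports "HOL-Analysis.Analysis"
begin

text \<open>Coefficients of (1-x)^(-gamma): c_j = gamma(gamma+1)...(gamma+j-1)/j! = (-1)^j binom(-gamma, j).\<close>
definition c_coef :: "real \<Rightarrow> nat \<Rightarrow> real" where
  "c_coef \<gamma> j = (-1) ^ j * ((- \<gamma>) gchoose j)"

text \<open>Coefficients of (1-x)^gamma: (-1)^k binom(gamma, k).\<close>
definition ct_coef :: "real \<Rightarrow> nat \<Rightarrow> real" where
  "ct_coef \<gamma> k = (-1) ^ k * (\<gamma> gchoose k)"

fun cp_coef :: "real \<Rightarrow> nat \<Rightarrow> nat \<Rightarrow> real" where
  "cp_coef \<gamma> p j = (if j = 0 then 1 else
     - (\<Sum>k\<in>{1..min (p - 1) j}. ct_coef \<gamma> k * cp_coef \<gamma> p (j - k)))"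

declare cp_coef.simps[simp del]

definition beta_gp :: "real \<Rightarrow> nat \<Rightarrow> real" where
  "beta_gp \<gamma> p = min ((1 - \<gamma>) / (2 * real p) * ln (2 * real p / (real p + 1)))
                        ((1 - \<gamma>) / (8 * real p powr \<gamma> * (real p - 1) powr (1 - \<gamma>)))"

end

theory Submission
  imports Defs
begin

text \<open>
  For j < p the truncated recurrence coincides with the convolution identity
  (1 - x)^gamma (1 - x)^(-gamma) = 1, so cp_coef equals c_coef there, whose successive
  ratios (gamma + j - 1) / j are at most 1 - (1 - gamma) / p; at j = p the missing
  convolution term only adds ct_coef gamma p <= 0. Since ct_coef gamma k <= 0 for k >= 1,
  every later term is a nonnegative combination of its p - 1 predecessors, so the same
  ratio bound propagates by strong induction. Thus the sequence decays from index p on at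
  least at rate 1 - (1 - gamma) / p, and beta_gp gamma p <= (1 - gamma) / (4 p) is smaller.
\<close>

lemma gbinomial_Suc_eq:
  "(a::'a::field_char_0) gchoose Suc k = (a gchoose k) * (a - of_nat k) / of_nat (Suc k)"
  using gbinomial_absorption[of k a] gbinomial_absorb_comp[of a k]
  by (simp add: field_simps del: of_nat_Suc)

lemma ct_coef_0 [simp]: "ct_coef g 0 = 1"
  by (simp add: ct_coef_def)

lemma c_coef_0 [simp]: "c_coef g 0 = 1"
  by (simp add: c_coef_def)

lemma ct_coef_Suc: "ct_coef g (Suc k) = ct_coef g k * (real k - g) / real (Suc k)"
  unfolding ct_coef_def by (simp add: gbinomial_Suc_eq field_simps del: of_nat_Suc)

lemma c_coef_Suc: "c_coef g (Suc k) = c_coef g k * (g + real k) / real (Suc k)"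
  unfolding c_coef_def by (simp add: gbinomial_Suc_eq field_simps del: of_nat_Suc)

lemma ct_coef_nonpos:
  assumes "0 \<le> g" "g \<le> 1" "1 \<le> k"
  shows "ct_coef g k \<le> 0"
  using assms(3)
proof (induction k rule: dec_induct)
  case base
  then show ?case using assms by (simp add: ct_coef_def)
next
  case (step k)
  then have "0 \<le> real k - g" using assms by simp
  with step.IH show ?case by (simp add: ct_coef_Suc divide_nonpos_nonneg mult_nonpos_nonneg)
qed

lemma c_coef_pos:
  assumes "0 < g"
  shows "0 < c_coef g k"
  by (induction k) (use assms in \<open>simp_all add: c_coef_Suc\<close>)

lemma ct_coef_c_coef_convolution:
  assumes "1 \<le> n"
  shows "(\<Sum>k=0..n. ct_coef g k * c_coef g (n - k)) = 0"
proof -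
  have "ct_coef g k * c_coef g (n - k) = (-1) ^ n * ((g gchoose k) * ((-g) gchoose (n - k)))"
    if "k \<le> n" for k
  proof -
    have "(-1::real) ^ k * (-1) ^ (n - k) = (-1) ^ n"
      using that by (simp flip: power_add)
    then show ?thesis
      unfolding ct_coef_def c_coef_def by (metis mult.assoc mult.left_commute)
  qed
  then have "(\<Sum>k=0..n. ct_coef g k * c_coef g (n - k))
      = (-1) ^ n * (\<Sum>k=0..n. (g gchoose k) * ((-g) gchoose (n - k)))"
    by (simp add: sum_distrib_left)
  also have "\<dots> = 0"
    using assms by (simp add: gbinomial_Vandermonde gbinomial_0_left)
  finally show ?thesis .
qed

lemma c_coef_recurrence:
  assumes "1 \<le> n"
  shows "c_coef g n = - (\<Sum>k=1..n. ct_coef g k * c_coef g (n - k))"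
  using ct_coef_c_coef_convolution[OF assms, of g] by (simp add: sum.atLeast_Suc_atMost)

lemma cp_coef_eq_c_coef:
  assumes "j < p"
  shows "cp_coef g p j = c_coef g j"
  using assms
proof (induction j rule: less_induct)
  case (less j)
  show ?case
  proof (cases "j = 0")
    case True
    then show ?thesis by (simp add: cp_coef.simps)
  next
    case False
    then have "cp_coef g p j = - (\<Sum>k=1..j. ct_coef g k * cp_coef g p (j - k))"
      using less.prems by (subst cp_coef.simps) simp
    also have "\<dots> = - (\<Sum>k=1..j. ct_coef g k * c_coef g (j - k))"
      using less False by (intro arg_cong[where f = uminus] sum.cong) auto
    also have "\<dots> = c_coef g j"
      using False by (simp add: c_coef_recurrence)
    finally show ?thesis .
  qed
qed

lemma cp_coef_at_p:
  assumes "2 \<le> p"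
  shows "cp_coef g p p = c_coef g p + ct_coef g p"
proof -
  have "cp_coef g p p = - (\<Sum>k=1..p-1. ct_coef g k * cp_coef g p (p - k))"
    using assms by (subst cp_coef.simps) simp
  also have "\<dots> = - (\<Sum>k=1..p-1. ct_coef g k * c_coef g (p - k))"
    using assms by (intro arg_cong[where f = uminus] sum.cong) (auto simp: cp_coef_eq_c_coef)
  also have "\<dots> = - (\<Sum>k=1..p. ct_coef g k * c_coef g (p - k)) + ct_coef g p"
    using assms sum.cl_ivl_Suc[of "\<lambda>k. ct_coef g k * c_coef g (p - k)" 1 "p - 1"] by simp
  also have "\<dots> = c_coef g p + ct_coef g p"
    using assms by (simp add: c_coef_recurrence)
  finally show ?thesis .
qed

lemma cp_coef_at_p_le:
  assumes "0 \<le> g" "g \<le> 1" "2 \<le> p"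
  shows "cp_coef g p p \<le> c_coef g p"
  using cp_coef_at_p[OF assms(3), of g] ct_coef_nonpos[of g p] assms by simp

lemma c_coef_Suc_le:
  assumes "0 < g" "g \<le> 1" "Suc j \<le> p" "b \<le> (1 - g) / real p"
  shows "c_coef g (Suc j) \<le> (1 - b) * c_coef g j"
proof -
  have "(1 - g) / real p \<le> (1 - g) / real (Suc j)"
    using assms by (intro divide_left_mono) auto
  with assms(4) have "b \<le> (1 - g) / real (Suc j)"
    by linarith
  then have "b * real (Suc j) \<le> 1 - g"
    by (simp add: pos_le_divide_eq del: of_nat_Suc)
  then have "(g + real j) / real (Suc j) \<le> 1 - b"
    by (simp add: field_simps)
  with c_coef_pos[OF assms(1), of j] show ?thesis
    unfolding c_coef_Suc times_divide_eq_right[symmetric] mult.commute[of "1 - b"]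
    by (intro mult_left_mono) auto
qed

lemma cp_coef_Suc_le:
  assumes "0 < g" "g \<le> 1" "2 \<le> p" "b \<le> (1 - g) / real p"
  shows "cp_coef g p (Suc j) \<le> (1 - b) * cp_coef g p j"
proof (induction j rule: less_induct)
  case (less j)
  show ?case
  proof (cases "Suc j < p")
    case True
    then show ?thesis
      using assms c_coef_Suc_le[of g j p b] by (simp add: cp_coef_eq_c_coef)
  next
    case False
    then have "cp_coef g p (Suc j) = (\<Sum>k=1..p-1. (- ct_coef g k) * cp_coef g p (Suc j - k))"
      by (subst cp_coef.simps) (simp add: sum_negf)
    also have "\<dots> = (\<Sum>k=1..p-1. (- ct_coef g k) * cp_coef g p (Suc (j - k)))"
      using False by (intro sum.cong) (auto simp: Suc_diff_le)
    also have "\<dots> \<le> (\<Sum>k=1..p-1. (- ct_coef g k) * ((1 - b) * cp_coef g p (j - k)))"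
    proof (rule sum_mono)
      fix k
      assume k: "k \<in> {1..p-1}"
      then have "cp_coef g p (Suc (j - k)) \<le> (1 - b) * cp_coef g p (j - k)"
        using less.IH[of "j - k"] False by auto
      moreover have "0 \<le> - ct_coef g k"
        using ct_coef_nonpos[of g k] k assms by simp
      ultimately show "(- ct_coef g k) * cp_coef g p (Suc (j - k))
          \<le> (- ct_coef g k) * ((1 - b) * cp_coef g p (j - k))"
        by (rule mult_left_mono)
    qed
    also have "\<dots> = (1 - b) * cp_coef g p j"
      using False assms by (subst (2) cp_coef.simps) (simp add: sum_negf sum_distrib_left mult_ac)
    finally show ?thesis .
  qed
qed

lemma le_geometric_if_Suc_le:
  fixes a :: "nat \<Rightarrow> 'a::linordered_semidom"
  assumes "0 \<le> r" "\<And>n. m \<le> n \<Longrightarrow> a (Suc n) \<le> r * a n" "m \<le> n"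
  shows "a n \<le> a m * r ^ (n - m)"
  using assms(3)
proof (induction n rule: dec_induct)
  case base
  then show ?case by simp
next
  case (step n)
  have "a (Suc n) \<le> r * a n"
    using assms(2) step.hyps by simp
  also have "\<dots> \<le> r * (a m * r ^ (n - m))"
    using step.IH assms(1) by (rule mult_left_mono)
  finally show ?case
    using step.hyps by (simp add: Suc_diff_le mult_ac)
qed

lemma powr_weighted_mean_between:
  fixes x y g :: real
  assumes "0 < x" "x \<le> y" "0 \<le> g" "g \<le> 1"
  shows "x \<le> y powr g * x powr (1 - g)" and "y powr g * x powr (1 - g) \<le> y"
proof -
  have "x = x powr g * x powr (1 - g)"
    using assms(1) by (simp flip: powr_add)
  also have "\<dots> \<le> y powr g * x powr (1 - g)"
    using assms by (intro mult_right_mono powr_mono2) auto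
  finally show "x \<le> y powr g * x powr (1 - g)" .
  have "y powr g * x powr (1 - g) \<le> y powr g * y powr (1 - g)"
    using assms by (intro mult_left_mono powr_mono2) auto
  also have "\<dots> = y"
    using assms by (simp flip: powr_add)
  finally show "y powr g * x powr (1 - g) \<le> y" .
qed

lemma ln_double_div_succ_ge_quarter:
  fixes x :: real
  assumes "2 \<le> x"
  shows "1 / 4 \<le> ln (2 * x / (x + 1))"
proof -
  have "ln ((x + 1) / (2 * x)) \<le> (x + 1) / (2 * x) - 1"
    using assms by (intro ln_le_minus_one) simp
  also have "\<dots> \<le> - 1 / 4"
    using assms by (simp add: field_simps)
  finally show ?thesis
    using assms by (simp add: ln_div)
qed

lemma beta_gp_bounds:
  assumes "0 < g" "g < 1" "2 \<le> p"
  shows "(1 - g) / (8 * real p) \<le> beta_gp g p" and "beta_gp g p \<le> (1 - g) / (4 * real p)"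
proof -
  define L where "L = ln (2 * real p / (real p + 1))"
  define D where "D = real p powr g * (real p - 1) powr (1 - g)"
  have p: "2 \<le> real p"
    using assms by simp
  have D: "real p - 1 \<le> D" "D \<le> real p"
    unfolding D_def using powr_weighted_mean_between[of "real p - 1" "real p" g] p assms by auto
  have "(1 - g) / (8 * real p) = (1 - g) / (2 * real p) * (1 / 4)"
    by simp
  also have "\<dots> \<le> (1 - g) / (2 * real p) * L"
    unfolding L_def using ln_double_div_succ_ge_quarter[OF p] assms by (intro mult_left_mono) auto
  finally have "(1 - g) / (8 * real p) \<le> (1 - g) / (2 * real p) * L" .
  moreover have "(1 - g) / (8 * real p) \<le> (1 - g) / (8 * D)"
    using D p assms by (intro divide_left_mono) auto
  moreover have "(1 - g) / (8 * D) \<le> (1 - g) / (4 * real p)"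
    using D p assms by (intro divide_left_mono) auto
  moreover have "beta_gp g p = min ((1 - g) / (2 * real p) * L) ((1 - g) / (8 * D))"
    unfolding beta_gp_def L_def D_def by (simp add: mult.assoc)
  ultimately show "(1 - g) / (8 * real p) \<le> beta_gp g p" "beta_gp g p \<le> (1 - g) / (4 * real p)"
    by simp_all
qed

theorem mainTheorem6:
  fixes \<gamma> :: real and p :: nat
  assumes "0 < \<gamma>" "\<gamma> < 1" "p \<ge> 2"
  shows "(\<forall>j\<ge>p. cp_coef \<gamma> p j \<le> c_coef \<gamma> p * (1 - beta_gp \<gamma> p) ^ (j - p))
         \<and> (1 - \<gamma>) / (8 * real p) \<le> beta_gp \<gamma> p
         \<and> beta_gp \<gamma> p \<le> (1 - \<gamma>) / (4 * real p)"
proof -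
  note bounds = beta_gp_bounds[OF assms]
  have "(1 - \<gamma>) / (4 * real p) \<le> (1 - \<gamma>) / real p"
    using assms by (intro divide_left_mono) auto
  with bounds have rate: "beta_gp \<gamma> p \<le> (1 - \<gamma>) / real p"
    by linarith
  have "(1 - \<gamma>) / real p \<le> 1"
    using assms by (simp add: field_simps)
  with rate have "0 \<le> 1 - beta_gp \<gamma> p"
    by linarith
  have "cp_coef \<gamma> p j \<le> c_coef \<gamma> p * (1 - beta_gp \<gamma> p) ^ (j - p)" if "p \<le> j" for j
  proof -
    have "cp_coef \<gamma> p j \<le> cp_coef \<gamma> p p * (1 - beta_gp \<gamma> p) ^ (j - p)"
      using \<open>0 \<le> 1 - beta_gp \<gamma> p\<close> cp_coef_Suc_le[OF assms(1) _ assms(3) rate] assms(2) that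
      by (intro le_geometric_if_Suc_le) auto
    also have "\<dots> \<le> c_coef \<gamma> p * (1 - beta_gp \<gamma> p) ^ (j - p)"
      using cp_coef_at_p_le[of \<gamma> p] assms \<open>0 \<le> 1 - beta_gp \<gamma> p\<close> by (intro mult_right_mono) auto
    finally show ?thesis .
  qed
  with bounds show ?thesis
    by blast
qed

end
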